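(* Let $(V,\mathrm{dist})$ be a metric space and $p_1,\dots,p_n\in V$ (not necessarily distinct). For $t\in[n]$ let $R_t:=\sum_{i=1}^t\mathrm{dist}(p_t,p_i)$ and $Q_t:=\sum_{i=1}^t\sum_{j=1}^t\mathrm{dist}(p_i,p_j)$. For any $t\in[n]$ with $Q_t>0$, $$\frac{2R_t}{Q_t}\ \ge\ \frac{\sum_{i=1}^n\mathrm{dist}(p_t,p_i)}{Q_n}.$$ *)

theory Defs
  imports "HOL-Analysis.Analysis"
begin

end

theory Submission
  imports Defs
begin

(*
  Write R_A(x) for the sum of d(x, p_i) over i in A, and Q_A for the sum of d(p_i, p_j)
  over i, j in A.  Routing every distance through a common point gives
  Q_A <= 2 |A| R_A(y) for every y, and |A| d(x, y) <= R_A(x) + R_A(y); together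
  d(x, y) Q_A <= 2 min(R_A(x), R_A(y)) (R_A(x) + R_A(y)) <= 4 R_A(x) R_A(y).
  Summing over the points y of B - A bounds the new distances from x by 4 R_A(x) times
  the cross sum X in Q_B = Q_A + 2 X + Q_(B-A), whence R_B(x) Q_A <= 2 R_A(x) Q_B.
  The theorem is the case A = {1..t}, B = {1..n}, x = p_t.
*)

lemma min_mult_add_le:
  fixes a b :: "'a::linordered_idom"
  assumes "0 \<le> a" "0 \<le> b"
  shows "min a b * (a + b) \<le> 2 * a * b"
  using assms by (cases "a \<le> b") (auto simp: algebra_simps mult_right_mono mult_left_mono)

lemma sum_sum_dist_le_card_sum_dist:
  fixes p :: "'i \<Rightarrow> 'a::metric_space"
  assumes "finite A"
  shows "(\<Sum>i\<in>A. \<Sum>j\<in>A. dist (p i) (p j)) \<le> 2 * real (card A) * (\<Sum>i\<in>A. dist y (p i))"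
proof -
  have "(\<Sum>i\<in>A. \<Sum>j\<in>A. dist (p i) (p j)) \<le> (\<Sum>i\<in>A. \<Sum>j\<in>A. dist y (p i) + dist y (p j))"
    by (intro sum_mono dist_triangle3)
  also have "\<dots> = 2 * real (card A) * (\<Sum>i\<in>A. dist y (p i))"
    by (simp add: sum.distrib sum_distrib_left[symmetric] sum.swap[of _ A A])
  finally show ?thesis .
qed

lemma card_mult_dist_le_sum_dist:
  fixes p :: "'i \<Rightarrow> 'a::metric_space"
  shows "real (card A) * dist x y \<le> (\<Sum>i\<in>A. dist x (p i)) + (\<Sum>i\<in>A. dist y (p i))"
proof -
  have "real (card A) * dist x y = (\<Sum>i\<in>A. dist x y)" by simp
  also have "\<dots> \<le> (\<Sum>i\<in>A. dist x (p i) + dist y (p i))"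
    by (intro sum_mono dist_triangle2)
  finally show ?thesis by (simp add: sum.distrib)
qed

lemma dist_mult_sum_sum_dist_le:
  fixes p :: "'i \<Rightarrow> 'a::metric_space"
  assumes "finite A"
  shows "dist x y * (\<Sum>i\<in>A. \<Sum>j\<in>A. dist (p i) (p j))
         \<le> 4 * (\<Sum>i\<in>A. dist x (p i)) * (\<Sum>i\<in>A. dist y (p i))"
proof -
  define Rx where "Rx = (\<Sum>i\<in>A. dist x (p i))"
  define Ry where "Ry = (\<Sum>i\<in>A. dist y (p i))"
  have "Rx \<ge> 0" "Ry \<ge> 0" by (simp_all add: Rx_def Ry_def sum_nonneg)
  have Q_le: "(\<Sum>i\<in>A. \<Sum>j\<in>A. dist (p i) (p j)) \<le> 2 * real (card A) * min Rx Ry"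
    using sum_sum_dist_le_card_sum_dist[OF assms, of p x]
      sum_sum_dist_le_card_sum_dist[OF assms, of p y]
    by (simp add: Rx_def Ry_def)
  have "dist x y * (\<Sum>i\<in>A. \<Sum>j\<in>A. dist (p i) (p j)) \<le> dist x y * (2 * real (card A) * min Rx Ry)"
    using Q_le by (simp add: mult_left_mono)
  also have "\<dots> = 2 * min Rx Ry * (real (card A) * dist x y)" by simp
  also have "\<dots> \<le> 2 * min Rx Ry * (Rx + Ry)"
    using card_mult_dist_le_sum_dist[of A x y p] \<open>Rx \<ge> 0\<close> \<open>Ry \<ge> 0\<close>
    by (intro mult_left_mono) (simp_all add: Rx_def Ry_def)
  also have "\<dots> \<le> 4 * Rx * Ry"
    using min_mult_add_le[OF \<open>Rx \<ge> 0\<close> \<open>Ry \<ge> 0\<close>] by linarith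
  finally show ?thesis by (simp add: Rx_def Ry_def)
qed

lemma sum_sum_dist_split:
  fixes p :: "'i \<Rightarrow> 'a::metric_space"
  assumes "finite B" "A \<subseteq> B"
  shows "(\<Sum>i\<in>B. \<Sum>j\<in>B. dist (p i) (p j))
         = (\<Sum>i\<in>A. \<Sum>j\<in>A. dist (p i) (p j)) + 2 * (\<Sum>j\<in>B - A. \<Sum>i\<in>A. dist (p j) (p i))
           + (\<Sum>i\<in>B - A. \<Sum>j\<in>B - A. dist (p i) (p j))"
proof -
  have split: "sum f B = sum f A + sum f (B - A)" for f :: "'i \<Rightarrow> real"
    using assms by (simp add: sum.subset_diff)
  have "(\<Sum>i\<in>A. \<Sum>j\<in>B - A. dist (p i) (p j)) = (\<Sum>j\<in>B - A. \<Sum>i\<in>A. dist (p j) (p i))"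
    by (subst sum.swap) (simp add: dist_commute)
  then show ?thesis
    by (simp only: split sum.distrib)
qed

lemma sum_dist_mult_sum_sum_dist_le:
  fixes p :: "'i \<Rightarrow> 'a::metric_space"
  assumes "finite B" "A \<subseteq> B"
  shows "(\<Sum>j\<in>B. dist x (p j)) * (\<Sum>i\<in>A. \<Sum>j\<in>A. dist (p i) (p j))
         \<le> 2 * (\<Sum>i\<in>A. dist x (p i)) * (\<Sum>i\<in>B. \<Sum>j\<in>B. dist (p i) (p j))"
proof -
  have fin: "finite A" "finite (B - A)" using assms finite_subset by auto
  define R where "R = (\<Sum>i\<in>A. dist x (p i))"
  define Q where "Q = (\<Sum>i\<in>A. \<Sum>j\<in>A. dist (p i) (p j))"
  define X where "X = (\<Sum>j\<in>B - A. \<Sum>i\<in>A. dist (p j) (p i))"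
  define Q' where "Q' = (\<Sum>i\<in>B - A. \<Sum>j\<in>B - A. dist (p i) (p j))"
  have "R \<ge> 0" "Q \<ge> 0" "Q' \<ge> 0" by (simp_all add: R_def Q_def Q'_def sum_nonneg)
  have "(\<Sum>j\<in>B. dist x (p j)) = R + (\<Sum>j\<in>B - A. dist x (p j))"
    using assms fin by (simp add: R_def sum.subset_diff)
  then have "(\<Sum>j\<in>B. dist x (p j)) * Q = R * Q + (\<Sum>j\<in>B - A. dist x (p j) * Q)"
    by (simp add: distrib_right sum_distrib_right)
  also have "\<dots> \<le> R * Q + (\<Sum>j\<in>B - A. 4 * R * (\<Sum>i\<in>A. dist (p j) (p i)))"
    unfolding Q_def R_def by (intro add_left_mono sum_mono dist_mult_sum_sum_dist_le fin)
  also have "\<dots> = R * Q + 4 * R * X"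
    by (simp add: X_def sum_distrib_left)
  also have "\<dots> \<le> 2 * R * (Q + 2 * X + Q')"
    using \<open>R \<ge> 0\<close> \<open>Q \<ge> 0\<close> \<open>Q' \<ge> 0\<close> by (simp add: algebra_simps)
  finally show ?thesis
    using sum_sum_dist_split[OF assms, of p] by (simp add: R_def Q_def X_def Q'_def)
qed

theorem lemma3p7:
  fixes p :: "nat \<Rightarrow> 'a::metric_space" and n t :: nat
  assumes "t \<in> {1..n}"
    and "(\<Sum>i=1..t. \<Sum>j=1..t. dist (p i) (p j)) > 0"
  shows "2 * (\<Sum>i=1..t. dist (p t) (p i)) / (\<Sum>i=1..t. \<Sum>j=1..t. dist (p i) (p j))
         \<ge> (\<Sum>i=1..n. dist (p t) (p i)) / (\<Sum>i=1..n. \<Sum>j=1..n. dist (p i) (p j))"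
proof -
  have sub: "{1..t} \<subseteq> {1..n}" using assms(1) by auto
  have "(\<Sum>i=1..t. \<Sum>j=1..t. dist (p i) (p j)) \<le> (\<Sum>i=1..n. \<Sum>j=1..n. dist (p i) (p j))"
    using sum_sum_dist_split[OF _ sub, of p] by (simp add: sum_nonneg)
  with assms(2) show ?thesis
    using sum_dist_mult_sum_sum_dist_le[OF _ sub, of "p t" p]
    by (simp add: divide_simps)
qed

end
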